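(* Let $f=\frac1n\sum_{i=1}^n f_i$ where each $f_i:\mathbb{R}^d\to\mathbb{R}$ is $L$-smooth, and assume moreover that either each $f_i$ is $\mu$-strongly convex for some $\mu>0$, or $\inf_x f(x)>-\infty$. Then the iterates of No Full Grad SARAH (described in the context) satisfy, for every epoch $s$, $$\Big\|\nabla f(x_s^0)-\frac1{n+1}\sum_{t=0}^{n}v_s^t\Big\|^2\le 2\|\nabla f(x_s^0)-v_s\|^2+\frac{2L^2}{n+1}\sum_{t=1}^{n}\|x_s^t-x_s^{t-1}\|^2.$$
   Context: No Full Grad SARAH: input $x_0^0\in\mathbb{R}^d$, $v_0=0$, stepsize $\gamma>0$. For epochs $s=0,1,\dots$: choose a permutation $\pi_s^1,\dots,\pi_s^n$ of $\{1,\dots,n\}$ (by any shuffling rule); set $\tilde v_s^1=0$, $v_s^0=v_s$, $x_s^1=x_s^0-\gamma v_s^0$; for $t=1,\dots,n$ set $\tilde v_s^{t+1}=\frac{t-1}{t}\tilde v_s^t+\frac1t\nabla f_{\pi_s^t}(x_s^t)$, $v_s^t=\frac1n\big(\nabla f_{\pi_s^t}(x_s^t)-\nabla f_{\pi_s^t}(x_s^{t-1})\big)+v_s^{t-1}$, $x_s^{t+1}=x_s^t-\gamma v_s^t$; then $x_{s+1}^0=x_s^{n+1}$, $v_{s+1}=\tilde v_s^{n+1}$. *)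

theory Defs
  imports "HOL-Analysis.Analysis"
begin

text \<open>Gradients are passed explicitly: \<open>G i x\<close> is the gradient of \<open>f i\<close> at \<open>x\<close>,
  linked to \<open>f i\<close> by a has_derivative hypothesis in the theorem.\<close>

definition L_smooth :: "('a::euclidean_space \<Rightarrow> real) \<Rightarrow> ('a \<Rightarrow> 'a) \<Rightarrow> real \<Rightarrow> bool" where
  "L_smooth f g L \<longleftrightarrow>
     (\<forall>x. (f has_derivative (\<lambda>h. g x \<bullet> h)) (at x)) \<and>
     (\<forall>x y. norm (g x - g y) \<le> L * norm (x - y))"

definition strongly_convex :: "real \<Rightarrow> ('a::euclidean_space \<Rightarrow> real) \<Rightarrow> bool" where
  "strongly_convex \<mu> f \<longleftrightarrow>
     (\<forall>x y \<theta>. 0 \<le> \<theta> \<and> \<theta> \<le> 1 \<longrightarrow>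
        f (\<theta> *\<^sub>R x + (1 - \<theta>) *\<^sub>R y)
          \<le> \<theta> * f x + (1 - \<theta>) * f y - \<mu> / 2 * \<theta> * (1 - \<theta>) * (norm (x - y))\<^sup>2)"

text \<open>Inner loop of one epoch of No Full Grad SARAH.
  \<open>sarah_xv G n \<gamma> p x0 v t = (x^t, v^t)\<close> for the epoch with start point \<open>x0 = x_s^0\<close>,
  \<open>v = v_s\<close> and permutation \<open>p = \<pi>_s\<close> (\<open>p t = \<pi>_s^t\<close>, 1-based).
  The first component at \<open>t = n+1\<close> is \<open>x_s^{n+1}\<close>.\<close>
fun sarah_xv :: "(nat \<Rightarrow> 'a::euclidean_space \<Rightarrow> 'a) \<Rightarrow> nat \<Rightarrow> real \<Rightarrow> (nat \<Rightarrow> nat)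
                   \<Rightarrow> 'a \<Rightarrow> 'a \<Rightarrow> nat \<Rightarrow> 'a \<times> 'a" where
  "sarah_xv G n \<gamma> p x0 v 0 = (x0, v)"
| "sarah_xv G n \<gamma> p x0 v (Suc t) =
     (let xt = fst (sarah_xv G n \<gamma> p x0 v t);
          vt = snd (sarah_xv G n \<gamma> p x0 v t);
          xt1 = xt - \<gamma> *\<^sub>R vt
      in (xt1, (1 / real n) *\<^sub>R (G (p (Suc t)) xt1 - G (p (Suc t)) xt) + vt))"

text \<open>\<open>sarah_vtil G n \<gamma> p x0 v t = \<tilde>v_s^t\<close> for \<open>t \<ge> 1\<close>: \<open>\<tilde>v^1 = 0\<close>,
  \<open>\<tilde>v^{t+1} = (t-1)/t \<tilde>v^t + 1/t \<nabla>f_{\<pi>^t}(x^t)\<close>. (Value at 0 is unused.)\<close>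
fun sarah_vtil :: "(nat \<Rightarrow> 'a::euclidean_space \<Rightarrow> 'a) \<Rightarrow> nat \<Rightarrow> real \<Rightarrow> (nat \<Rightarrow> nat)
                   \<Rightarrow> 'a \<Rightarrow> 'a \<Rightarrow> nat \<Rightarrow> 'a" where
  "sarah_vtil G n \<gamma> p x0 v 0 = 0"
| "sarah_vtil G n \<gamma> p x0 v (Suc t) =
     (if t = 0 then 0
      else ((real t - 1) / real t) *\<^sub>R sarah_vtil G n \<gamma> p x0 v t
           + (1 / real t) *\<^sub>R G (p t) (fst (sarah_xv G n \<gamma> p x0 v t)))"

text \<open>Outer loop: \<open>sarah_start G n \<gamma> \<pi> x00 s = (x_s^0, v_s)\<close>, with \<open>v_0 = 0\<close>.\<close>
fun sarah_start :: "(nat \<Rightarrow> 'a::euclidean_space \<Rightarrow> 'a) \<Rightarrow> nat \<Rightarrow> real \<Rightarrow> (nat \<Rightarrow> nat \<Rightarrow> nat)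
                   \<Rightarrow> 'a \<Rightarrow> nat \<Rightarrow> 'a \<times> 'a" where
  "sarah_start G n \<gamma> \<pi> x00 0 = (x00, 0)"
| "sarah_start G n \<gamma> \<pi> x00 (Suc s) =
     (let x0 = fst (sarah_start G n \<gamma> \<pi> x00 s);
          v = snd (sarah_start G n \<gamma> \<pi> x00 s)
      in (fst (sarah_xv G n \<gamma> (\<pi> s) x0 v (Suc n)),
          sarah_vtil G n \<gamma> (\<pi> s) x0 v (Suc n)))"

text \<open>Iterates: \<open>sarah_x \<dots> s t = x_s^t\<close>, \<open>sarah_v \<dots> s t = v_s^t\<close>, \<open>sarah_vs \<dots> s = v_s\<close>.\<close>
definition sarah_x where
  "sarah_x G n \<gamma> \<pi> x00 s t =
     fst (sarah_xv G n \<gamma> (\<pi> s) (fst (sarah_start G n \<gamma> \<pi> x00 s)) (snd (sarah_start G n \<gamma> \<pi> x00 s)) t)"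

definition sarah_v where
  "sarah_v G n \<gamma> \<pi> x00 s t =
     snd (sarah_xv G n \<gamma> (\<pi> s) (fst (sarah_start G n \<gamma> \<pi> x00 s)) (snd (sarah_start G n \<gamma> \<pi> x00 s)) t)"

definition sarah_vs where
  "sarah_vs G n \<gamma> \<pi> x00 s = snd (sarah_start G n \<gamma> \<pi> x00 s)"

end

theory Submission
  imports Defs
begin

text \<open>Within an epoch the SARAH estimates telescope: \<open>v_s^t = v_s + \<Sum>_{k\<le>t} D_k\<close>, where each
  increment \<open>D_k\<close> is a difference of one component gradient at consecutive iterates scaled
  by \<open>1/n\<close>, so \<open>\<parallel>D_k\<parallel> \<le> (L/n) \<parallel>x_s^k - x_s^{k-1}\<parallel>\<close> by \<open>L\<close>-smoothness. Hence the mean of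
  \<open>v_s^0, \<dots>, v_s^n\<close> is \<open>v_s\<close> plus a vector of norm at most \<open>L/(n+1) \<Sum>_k \<parallel>x_s^k - x_s^{k-1}\<parallel>\<close>;
  the claim follows from \<open>\<parallel>a - b\<parallel>\<^sup>2 \<le> 2\<parallel>a\<parallel>\<^sup>2 + 2\<parallel>b\<parallel>\<^sup>2\<close> and Cauchy-Schwarz.\<close>

lemma norm_diff_power2_le:
  fixes a b :: "'a::real_normed_vector"
  shows "(norm (a - b))\<^sup>2 \<le> 2 * (norm a)\<^sup>2 + 2 * (norm b)\<^sup>2"
proof -
  have "(norm (a - b))\<^sup>2 \<le> (norm a + norm b)\<^sup>2"
    using norm_triangle_ineq4 by (intro power_mono) auto
  also have "\<dots> \<le> 2 * (norm a)\<^sup>2 + 2 * (norm b)\<^sup>2"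
    by (smt (verit) sum_squares_bound power2_sum)
  finally show ?thesis .
qed

lemma norm_sum_partial_sums_le:
  fixes D :: "nat \<Rightarrow> 'a::real_normed_vector"
  assumes D: "\<And>k. k \<in> {1..n} \<Longrightarrow> norm (D k) \<le> c k"
  shows "norm (\<Sum>t=0..n. \<Sum>k=1..t. D k) \<le> real n * (\<Sum>k=1..n. c k)"
proof -
  have partial: "norm (\<Sum>k=1..t. D k) \<le> (\<Sum>k=1..n. c k)" if "t \<le> n" for t
  proof -
    have "norm (\<Sum>k=1..t. D k) \<le> (\<Sum>k=1..t. c k)"
      using D that by (intro sum_norm_le) auto
    also have "\<dots> \<le> (\<Sum>k=1..n. c k)"
      using D that by (intro sum_mono2) (auto intro: order_trans[OF norm_ge_zero])
    finally show ?thesis .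
  qed
  have "norm (\<Sum>t=0..n. \<Sum>k=1..t. D k) = norm (\<Sum>t=1..n. \<Sum>k=1..t. D k)"
    by (simp add: sum.atLeast_Suc_atMost)
  also have "\<dots> \<le> (\<Sum>t=1..n. \<Sum>k=1..n. c k)"
    using partial by (intro sum_norm_le) auto
  also have "\<dots> = real n * (\<Sum>k=1..n. c k)"
    by simp
  finally show ?thesis .
qed

lemma norm_mean_partial_sums_power2_le:
  fixes D :: "nat \<Rightarrow> 'a::real_normed_vector"
  assumes D: "\<And>k. k \<in> {1..n} \<Longrightarrow> norm (D k) \<le> L / real n * d k"
  shows "(norm ((1 / (real n + 1)) *\<^sub>R (\<Sum>t=0..n. \<Sum>k=1..t. D k)))\<^sup>2
           \<le> L\<^sup>2 / (real n + 1) * (\<Sum>k=1..n. (d k)\<^sup>2)"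
proof (cases "n = 0")
  case True
  then show ?thesis by simp
next
  case False
  define S where "S = (\<Sum>k=1..n. d k)"
  have "norm (\<Sum>t=0..n. \<Sum>k=1..t. D k) \<le> real n * (\<Sum>k=1..n. L / real n * d k)"
    using D by (rule norm_sum_partial_sums_le)
  also have "\<dots> = L * S"
    using False by (simp add: S_def sum_distrib_left)
  finally have "norm ((1 / (real n + 1)) *\<^sub>R (\<Sum>t=0..n. \<Sum>k=1..t. D k)) \<le> L * S / (real n + 1)"
    by (simp add: divide_right_mono)
  then have "(norm ((1 / (real n + 1)) *\<^sub>R (\<Sum>t=0..n. \<Sum>k=1..t. D k)))\<^sup>2 \<le> (L * S / (real n + 1))\<^sup>2"
    by (intro power_mono) auto
  also have "\<dots> = L\<^sup>2 * S\<^sup>2 / (real n + 1)\<^sup>2"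
    by (simp add: power_divide power_mult_distrib)
  also have "\<dots> \<le> L\<^sup>2 * ((\<Sum>k=1..n. (d k)\<^sup>2) * real n) / (real n + 1)\<^sup>2"
    using sum_squared_le_sum_of_squares[of d "{1..n}"]
    by (intro divide_right_mono mult_left_mono) (auto simp: S_def)
  also have "\<dots> \<le> L\<^sup>2 / (real n + 1) * (\<Sum>k=1..n. (d k)\<^sup>2)"
  proof -
    have "real n / (real n + 1)\<^sup>2 \<le> 1 / (real n + 1)"
      by (simp add: divide_simps power2_eq_square)
    then have "L\<^sup>2 * (\<Sum>k=1..n. (d k)\<^sup>2) * (real n / (real n + 1)\<^sup>2)
               \<le> L\<^sup>2 * (\<Sum>k=1..n. (d k)\<^sup>2) * (1 / (real n + 1))"
      by (intro mult_left_mono mult_nonneg_nonneg sum_nonneg) auto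
    then show ?thesis by simp
  qed
  finally show ?thesis .
qed

lemma norm_diff_mean_partial_sums_power2_le:
  fixes V D :: "nat \<Rightarrow> 'a::real_normed_vector"
  assumes V: "\<And>t. V t = v + (\<Sum>k=1..t. D k)"
    and D: "\<And>k. k \<in> {1..n} \<Longrightarrow> norm (D k) \<le> L / real n * d k"
  shows "(norm (g - (1 / (real n + 1)) *\<^sub>R (\<Sum>t=0..n. V t)))\<^sup>2
           \<le> 2 * (norm (g - v))\<^sup>2 + 2 * L\<^sup>2 / (real n + 1) * (\<Sum>k=1..n. (d k)\<^sup>2)"
proof -
  define B where "B = (1 / (real n + 1)) *\<^sub>R (\<Sum>t=0..n. \<Sum>k=1..t. D k)"
  have "(\<Sum>t=0..n. V t) = (\<Sum>t=0..n. v) + (\<Sum>t=0..n. \<Sum>k=1..t. D k)"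
    unfolding V by (rule sum.distrib)
  also have "(\<Sum>t=0..n. v) = (real n + 1) *\<^sub>R v"
    by (simp add: sum_constant_scaleR)
  finally have "(1 / (real n + 1)) *\<^sub>R (\<Sum>t=0..n. V t) = v + B"
    by (simp add: B_def scaleR_add_right)
  then have "(norm (g - (1 / (real n + 1)) *\<^sub>R (\<Sum>t=0..n. V t)))\<^sup>2 = (norm ((g - v) - B))\<^sup>2"
    by (simp add: algebra_simps)
  also have "\<dots> \<le> 2 * (norm (g - v))\<^sup>2 + 2 * (norm B)\<^sup>2"
    by (rule norm_diff_power2_le)
  also have "\<dots> \<le> 2 * (norm (g - v))\<^sup>2 + 2 * L\<^sup>2 / (real n + 1) * (\<Sum>k=1..n. (d k)\<^sup>2)"
    using norm_mean_partial_sums_power2_le[of n D L d] D by (simp add: B_def)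
  finally show ?thesis .
qed

lemma L_smooth_gradient_lipschitz:
  "L_smooth f g L \<Longrightarrow> norm (g x - g y) \<le> L * norm (x - y)"
  by (simp add: L_smooth_def)

lemma sarah_v_eq_sarah_vs_plus_increments:
  "sarah_v G n \<gamma> \<pi> x00 s t = sarah_vs G n \<gamma> \<pi> x00 s
     + (\<Sum>k=1..t. (1 / real n) *\<^sub>R (G (\<pi> s k) (sarah_x G n \<gamma> \<pi> x00 s k)
                                   - G (\<pi> s k) (sarah_x G n \<gamma> \<pi> x00 s (k - 1))))"
proof (induction t)
  case 0
  then show ?case by (simp add: sarah_v_def sarah_vs_def)
next
  case (Suc t)
  then show ?case by (simp add: sarah_v_def sarah_x_def Let_def add.commute)
qed

theorem lemma3:
  fixes f :: "nat \<Rightarrow> 'a::euclidean_space \<Rightarrow> real"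
    and G :: "nat \<Rightarrow> 'a \<Rightarrow> 'a"
    and n :: nat and L \<gamma> :: real
    and \<pi> :: "nat \<Rightarrow> nat \<Rightarrow> nat"
    and x00 :: 'a and s :: nat
  assumes n: "n \<ge> 1"
    and \<gamma>: "\<gamma> > 0"
    and smooth: "\<And>i. i \<in> {1..n} \<Longrightarrow> L_smooth (f i) (G i) L"
    and extra: "(\<exists>\<mu>>0. \<forall>i\<in>{1..n}. strongly_convex \<mu> (f i))
                \<or> bdd_below (range (\<lambda>x. (1 / real n) * (\<Sum>i=1..n. f i x)))"
    and perm: "\<And>s. bij_betw (\<pi> s) {1..n} {1..n}"
  shows "(norm ((1 / real n) *\<^sub>R (\<Sum>i=1..n. G i (sarah_x G n \<gamma> \<pi> x00 s 0))
                - (1 / (real n + 1)) *\<^sub>R (\<Sum>t=0..n. sarah_v G n \<gamma> \<pi> x00 s t)))\<^sup>2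
         \<le> 2 * (norm ((1 / real n) *\<^sub>R (\<Sum>i=1..n. G i (sarah_x G n \<gamma> \<pi> x00 s 0))
                      - sarah_vs G n \<gamma> \<pi> x00 s))\<^sup>2
           + 2 * L\<^sup>2 / (real n + 1)
             * (\<Sum>t=1..n. (norm (sarah_x G n \<gamma> \<pi> x00 s t - sarah_x G n \<gamma> \<pi> x00 s (t - 1)))\<^sup>2)"
proof -
  let ?x = "sarah_x G n \<gamma> \<pi> x00 s"
  have increment_le:
    "norm ((1 / real n) *\<^sub>R (G (\<pi> s k) (?x k) - G (\<pi> s k) (?x (k - 1))))
       \<le> L / real n * norm (?x k - ?x (k - 1))" if "k \<in> {1..n}" for k
  proof -
    have "\<pi> s k \<in> {1..n}"
      using perm[of s] that by (auto simp: bij_betw_def)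
    then have "norm (G (\<pi> s k) (?x k) - G (\<pi> s k) (?x (k - 1))) \<le> L * norm (?x k - ?x (k - 1))"
      using smooth L_smooth_gradient_lipschitz by blast
    then show ?thesis
      by (simp add: divide_right_mono)
  qed
  show ?thesis
    using sarah_v_eq_sarah_vs_plus_increments increment_le
    by (rule norm_diff_mean_partial_sums_power2_le)
qed

end
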